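(* Let $X,Y$ be reflexive Banach spaces, $\varphi:X\times Y\to\mathbb{R}\cup\{+\infty\}$ a proper convex lower semicontinuous function with $(0,0)\in{\rm dom}(\varphi)$ and $\lim_{\|x\|+\|y\|\to\infty}\frac{\varphi(x,y)}{\|x\|+\|y\|}=+\infty$, $A:X\to Y^*$ a bounded linear operator, and $B_1:X\to X^*$, $B_2:Y\to Y^*$ bounded linear skew-adjoint operators. Then the functional $$I(x,y)=\varphi(x,y)+\varphi^*(-A^*y+B_1x,\ Ax+B_2y)$$ has infimum $0$ on $X\times Y$, attained at some $(\bar x,\bar y)$, and $$(-A^*\bar y+B_1\bar x,\ A\bar x+B_2\bar y)\in\partial\varphi(\bar x,\bar y).$$
   Context: $\varphi^*$ is the Legendre conjugate of $\varphi$ on $X^*\times Y^*$; $\partial\varphi$ is the convex subdifferential. *)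

theory Defs
  imports "HOL-Analysis.Analysis"
begin

definition canon_emb :: "'a::real_normed_vector \<Rightarrow> (('a \<Rightarrow>\<^sub>L real) \<Rightarrow>\<^sub>L real)" where
  "canon_emb x = Blinfun (\<lambda>f. blinfun_apply f x)"

definition reflexive_space :: "'a::real_normed_vector itself \<Rightarrow> bool" where
  "reflexive_space _ \<longleftrightarrow> surj (canon_emb :: 'a \<Rightarrow> _)"

definition proper_fun :: "('a \<Rightarrow> ereal) \<Rightarrow> bool" where
  "proper_fun f \<longleftrightarrow> (\<forall>z. f z \<noteq> -\<infinity>) \<and> (\<exists>z. f z \<noteq> \<infinity>)"

definition convex_fun :: "('a::real_vector \<Rightarrow> ereal) \<Rightarrow> bool" where
  "convex_fun f \<longleftrightarrow> (\<forall>u v t. 0 < t \<and> t < 1 \<longrightarrow>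
      f (t *\<^sub>R u + (1 - t) *\<^sub>R v) \<le> ereal t * f u + ereal (1 - t) * f v)"

definition lsc_fun :: "('a::topological_space \<Rightarrow> ereal) \<Rightarrow> bool" where
  "lsc_fun f \<longleftrightarrow> (\<forall>c::real. closed {z. f z \<le> ereal c})"

definition dom_fun :: "('a \<Rightarrow> ereal) \<Rightarrow> 'a set" where
  "dom_fun f = {z. f z < \<infinity>}"

definition legendre ::
  "('a::real_normed_vector \<times> 'b::real_normed_vector \<Rightarrow> ereal)
    \<Rightarrow> ('a \<Rightarrow>\<^sub>L real) \<times> ('b \<Rightarrow>\<^sub>L real) \<Rightarrow> ereal" where
  "legendre \<phi> pq = (SUP z. ereal (blinfun_apply (fst pq) (fst z) + blinfun_apply (snd pq) (snd z)) - \<phi> z)"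

definition subdiff ::
  "('a::real_normed_vector \<times> 'b::real_normed_vector \<Rightarrow> ereal)
    \<Rightarrow> 'a \<times> 'b \<Rightarrow> (('a \<Rightarrow>\<^sub>L real) \<times> ('b \<Rightarrow>\<^sub>L real)) set" where
  "subdiff \<phi> z = {pq. \<phi> z \<noteq> \<infinity> \<and> (\<forall>w. \<phi> w \<ge> \<phi> z +
       ereal (blinfun_apply (fst pq) (fst w - fst z) + blinfun_apply (snd pq) (snd w - snd z)))}"

text \<open>Adjoint of A : X \<rightarrow> Y*, applied to y \<in> Y (identified with its image in Y**).\<close>
definition adj_app :: "('a::real_normed_vector \<Rightarrow>\<^sub>L ('b::real_normed_vector \<Rightarrow>\<^sub>L real)) \<Rightarrow> 'b \<Rightarrow> ('a \<Rightarrow>\<^sub>L real)" where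
  "adj_app A y = Blinfun (\<lambda>x. blinfun_apply (blinfun_apply A x) y)"

definition skew_adjoint :: "('a::real_normed_vector \<Rightarrow>\<^sub>L ('a \<Rightarrow>\<^sub>L real)) \<Rightarrow> bool" where
  "skew_adjoint B \<longleftrightarrow> (\<forall>x x'. blinfun_apply (blinfun_apply B x) x' = - blinfun_apply (blinfun_apply B x') x)"

end

(*
  Write \<Gamma>(x, y) = (-A\<^sup>* y + B1 x, A x + B2 y). Skewness of B1, B2 makes the coupling
  P w z = \<langle>\<Gamma> w, z\<rangle> antisymmetric, so P z z = 0 and the Fenchel--Young inequality gives I \<ge> 0.
  It therefore suffices to find z with \<phi> z \<le> \<phi> w + P w z for every w: this says precisely
  that \<Gamma> z \<in> \<partial>\<phi> z, which is the equality case I z = 0 of Fenchel--Young.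
  For finitely many test points w such a z exists by Ky Fan's minimax inequality on the
  convex hull of the test points. Testing also against w = 0 keeps these approximate solutions
  in the bounded sublevel set {\<phi> \<le> \<phi> 0}; by reflexivity (Tychonoff plus Hahn--Banach) the
  resulting bounded net has a weak cluster point, which solves the problem for all w since the
  sets {z. \<phi> z \<le> \<phi> w + P w z} are closed and convex.
*)
theory Submission
  imports Defs
begin

section \<open>Hahn--Banach\<close>

text \<open>Partial linear functionals are represented by their graphs, so that Zorn's lemma can be
  applied to plain set inclusion.\<close>

definition linear_graph :: "('a::real_vector \<times> real) set \<Rightarrow> bool" where
  "linear_graph G \<longleftrightarrow> (\<forall>x a b. (x, a) \<in> G \<longrightarrow> (x, b) \<in> G \<longrightarrow> a = b) \<and>
    (\<forall>x a y b. (x, a) \<in> G \<longrightarrow> (y, b) \<in> G \<longrightarrow> (x + y, a + b) \<in> G) \<and>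
    (\<forall>x a c. (x, a) \<in> G \<longrightarrow> (c *\<^sub>R x, c * a) \<in> G)"

lemma linear_graphD:
  assumes "linear_graph G"
  shows linear_graph_unique: "(x, a) \<in> G \<Longrightarrow> (x, b) \<in> G \<Longrightarrow> a = b"
    and linear_graph_add: "(x, a) \<in> G \<Longrightarrow> (y, b) \<in> G \<Longrightarrow> (x + y, a + b) \<in> G"
    and linear_graph_scaleR: "(x, a) \<in> G \<Longrightarrow> (c *\<^sub>R x, c * a) \<in> G"
  using assms unfolding linear_graph_def by blast+

lemma linear_graph_zero: "linear_graph G \<Longrightarrow> (x, a) \<in> G \<Longrightarrow> (0, 0) \<in> G"
  using linear_graph_scaleR[of G x a 0] by simp

lemma linear_graph_line:
  assumes "x0 \<noteq> 0"
  shows "linear_graph (range (\<lambda>t. (t *\<^sub>R x0, t)))"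
  unfolding linear_graph_def
proof (intro conjI allI impI)
  fix x a b assume "(x, a) \<in> range (\<lambda>t. (t *\<^sub>R x0, t))" "(x, b) \<in> range (\<lambda>t. (t *\<^sub>R x0, t))"
  then show "a = b" using assms by auto
qed (auto simp: image_iff scaleR_add_left intro!: exI)

lemma linear_graph_adjoin:
  assumes G: "linear_graph G" "(0, 0) \<in> G" and y: "y \<notin> fst ` G"
  shows "linear_graph {(x + t *\<^sub>R y, b + t * c) | x b t. (x, b) \<in> G}"
    (is "linear_graph ?G'")
proof -
  have coords_unique: "t1 = t2 \<and> x1 = x2"
    if "(x1, b1) \<in> G" "(x2, b2) \<in> G" "x1 + t1 *\<^sub>R y = x2 + t2 *\<^sub>R y" for x1 x2 b1 b2 t1 t2
  proof (rule ccontr)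
    assume "\<not> (t1 = t2 \<and> x1 = x2)"
    then have "t1 \<noteq> t2" using that(3) by auto
    have "(x1 + (-1) *\<^sub>R x2, b1 + (-1) * b2) \<in> G"
      using G that by (blast intro: linear_graph_add linear_graph_scaleR)
    then have "((1 / (t2 - t1)) *\<^sub>R (x1 - x2), (1 / (t2 - t1)) * (b1 - b2)) \<in> G"
      using G linear_graph_scaleR by fastforce
    moreover have "x1 - x2 = (t2 - t1) *\<^sub>R y" using that(3) by (simp add: algebra_simps)
    ultimately have "(y, (1 / (t2 - t1)) * (b1 - b2)) \<in> G" using \<open>t1 \<noteq> t2\<close> by simp
    then show False using y by force
  qed
  show ?thesis
    unfolding linear_graph_def
  proof (intro conjI allI impI)
    fix x a b assume "(x, a) \<in> ?G'" "(x, b) \<in> ?G'"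
    then obtain x1 b1 t1 x2 b2 t2 where "(x1, b1) \<in> G" "(x2, b2) \<in> G"
      "x = x1 + t1 *\<^sub>R y" "a = b1 + t1 * c" "x = x2 + t2 *\<^sub>R y" "b = b2 + t2 * c" by blast
    then show "a = b" using coords_unique linear_graph_unique[OF G(1)] by metis
  next
    fix x a z b assume "(x, a) \<in> ?G'" "(z, b) \<in> ?G'"
    then obtain x1 b1 t1 x2 b2 t2 where h: "(x1, b1) \<in> G" "(x2, b2) \<in> G"
      "x = x1 + t1 *\<^sub>R y" "a = b1 + t1 * c" "z = x2 + t2 *\<^sub>R y" "b = b2 + t2 * c" by blast
    then have "(x1 + x2, b1 + b2) \<in> G" using linear_graph_add[OF G(1)] by blast
    moreover have "x + z = (x1 + x2) + (t1 + t2) *\<^sub>R y" "a + b = (b1 + b2) + (t1 + t2) * c"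
      using h by (auto simp: algebra_simps)
    ultimately show "(x + z, a + b) \<in> ?G'" by blast
  next
    fix x a r assume "(x, a) \<in> ?G'"
    then obtain x1 b1 t1 where h: "(x1, b1) \<in> G" "x = x1 + t1 *\<^sub>R y" "a = b1 + t1 * c" by blast
    then have "(r *\<^sub>R x1, r * b1) \<in> G" using linear_graph_scaleR[OF G(1)] by blast
    moreover have "r *\<^sub>R x = r *\<^sub>R x1 + (r * t1) *\<^sub>R y" "r * a = r * b1 + (r * t1) * c"
      using h by (auto simp: algebra_simps)
    ultimately show "(r *\<^sub>R x, r * a) \<in> ?G'" by blast
  qed
qed

locale sublinear =
  fixes p :: "'a::real_vector \<Rightarrow> real"
  assumes subadditive: "p (x + y) \<le> p x + p y"
    and pos_homogeneous: "0 < a \<Longrightarrow> p (a *\<^sub>R x) = a * p x"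
begin

lemma extension_constant:
  assumes G: "linear_graph G" "(0, 0) \<in> G" "\<forall>(x, a)\<in>G. a \<le> p x"
  shows "\<exists>c. (\<forall>(x, b)\<in>G. b - p (x - y) \<le> c) \<and> (\<forall>(x, b)\<in>G. c \<le> p (x + y) - b)"
proof -
  define S where "S = {b - p (x - y) | x b. (x, b) \<in> G}"
  have bound: "s \<le> p (x' + y) - b'" if "s \<in> S" "(x', b') \<in> G" for s x' b'
  proof -
    obtain x b where xb: "s = b - p (x - y)" "(x, b) \<in> G" using \<open>s \<in> S\<close> unfolding S_def by blast
    have "b + b' \<le> p (x + x')" using G linear_graph_add xb(2) that(2) by fast
    also have "\<dots> \<le> p (x - y) + p (x' + y)" using subadditive[of "x - y" "x' + y"] by simp
    finally show ?thesis using xb by simp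
  qed
  have "S \<noteq> {}" using G(2) unfolding S_def by blast
  moreover have "bdd_above S" using bound G(2) by (auto simp: bdd_above_def)
  have "b - p (x - y) \<le> Sup S" "Sup S \<le> p (x + y) - b" if "(x, b) \<in> G" for x b
  proof -
    show "b - p (x - y) \<le> Sup S"
      using \<open>bdd_above S\<close> that by (intro cSup_upper) (auto simp: S_def)
    show "Sup S \<le> p (x + y) - b"
      using \<open>S \<noteq> {}\<close> bound that by (intro cSup_least) auto
  qed
  then show ?thesis by blast
qed

lemma dominated_adjoin:
  assumes G: "\<forall>(x, a)\<in>G. a \<le> p x"
    and c_lower: "\<And>x b. (x, b) \<in> G \<Longrightarrow> b - p (x - y) \<le> c"
    and c_upper: "\<And>x b. (x, b) \<in> G \<Longrightarrow> c \<le> p (x + y) - b"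
    and scaled: "\<And>x b s. (x, b) \<in> G \<Longrightarrow> (s *\<^sub>R x, s * b) \<in> G"
    and xb: "(x, b) \<in> G"
  shows "b + t * c \<le> p (x + t *\<^sub>R y)"
proof -
  consider "t = 0" | "t > 0" | "t < 0" by linarith
  then show ?thesis
  proof cases
    case 1
    then show ?thesis using G xb by auto
  next
    case 2
    have "c \<le> p ((1 / t) *\<^sub>R x + y) - (1 / t) * b" using c_upper scaled xb by blast
    then have "t * c \<le> t * p ((1 / t) *\<^sub>R x + y) - b"
      using 2 by (simp add: field_simps)
    also have "t * p ((1 / t) *\<^sub>R x + y) = p (x + t *\<^sub>R y)"
      using pos_homogeneous[OF 2, of "(1 / t) *\<^sub>R x + y"] 2 by (simp add: scaleR_add_right)
    finally show ?thesis by simp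
  next
    case 3
    have "(1 / - t) * b - p ((1 / - t) *\<^sub>R x - y) \<le> c" using c_lower scaled xb by blast
    then have "b - (- t) * p ((1 / - t) *\<^sub>R x - y) \<le> (- t) * c"
      using 3 by (simp add: field_simps)
    also have "(- t) * p ((1 / - t) *\<^sub>R x - y) = p (x + t *\<^sub>R y)"
      using pos_homogeneous[of "- t" "(1 / - t) *\<^sub>R x - y"] 3 by (simp add: scaleR_diff_right)
    finally show ?thesis by simp
  qed
qed

lemma dominated_linear_graph_extend:
  assumes G: "linear_graph G" "(0, 0) \<in> G" "\<forall>(x, a)\<in>G. a \<le> p x" and y: "y \<notin> fst ` G"
  shows "\<exists>G'. linear_graph G' \<and> (\<forall>(x, a)\<in>G'. a \<le> p x) \<and> G \<subset> G'"
proof -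
  obtain c where c_lower: "\<And>x b. (x, b) \<in> G \<Longrightarrow> b - p (x - y) \<le> c"
    and c_upper: "\<And>x b. (x, b) \<in> G \<Longrightarrow> c \<le> p (x + y) - b"
    using extension_constant[OF G, of y] by blast
  define G' where "G' = {(x + t *\<^sub>R y, b + t * c) | x b t. (x, b) \<in> G}"
  have "linear_graph G'" unfolding G'_def using linear_graph_adjoin[OF G(1,2) y] .
  moreover have "\<forall>(x, a)\<in>G'. a \<le> p x"
    unfolding G'_def using dominated_adjoin[OF G(3) c_lower c_upper linear_graph_scaleR[OF G(1)]] by blast
  moreover have "G \<subseteq> G'" unfolding G'_def by (force intro: exI[of _ 0])
  moreover have "G' \<noteq> G"
  proof -
    have "(0 + 1 *\<^sub>R y, 0 + 1 * c) \<in> G'" unfolding G'_def using G(2) by blast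
    then show ?thesis using y by force
  qed
  ultimately show ?thesis by blast
qed

lemma linear_graph_chain_Union:
  assumes "subset.chain \<A> \<C>" "\<forall>G\<in>\<C>. linear_graph G"
  shows "linear_graph (\<Union>\<C>)"
proof -
  have two: "\<exists>G\<in>\<C>. u \<in> G \<and> v \<in> G" if "u \<in> \<Union>\<C>" "v \<in> \<Union>\<C>" for u v
    using that assms(1) unfolding subset_chain_def by blast
  show ?thesis
    unfolding linear_graph_def
  proof (intro conjI allI impI)
    fix x a b assume "(x, a) \<in> \<Union>\<C>" "(x, b) \<in> \<Union>\<C>"
    then obtain G where "G \<in> \<C>" "(x, a) \<in> G" "(x, b) \<in> G" using two by blast
    then show "a = b" using assms(2) linear_graph_unique by blast
  next
    fix x a y b assume "(x, a) \<in> \<Union>\<C>" "(y, b) \<in> \<Union>\<C>"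
    then obtain G where "G \<in> \<C>" "(x, a) \<in> G" "(y, b) \<in> G" using two by blast
    then show "(x + y, a + b) \<in> \<Union>\<C>" using assms(2) linear_graph_add by blast
  next
    fix x a c assume "(x, a) \<in> \<Union>\<C>"
    then show "(c *\<^sub>R x, c * a) \<in> \<Union>\<C>" using assms(2) linear_graph_scaleR by blast
  qed
qed

lemma linear_graph_total_imp_linear:
  assumes "linear_graph G" "\<And>x. \<exists>a. (x, a) \<in> G"
  obtains f where "linear f" "\<And>x. (x, f x) \<in> G"
proof -
  define f where "f x = (THE a. (x, a) \<in> G)" for x
  have f_graph: "(x, f x) \<in> G" for x
    unfolding f_def using assms linear_graph_unique by (metis theI)
  have f_eq: "f x = a" if "(x, a) \<in> G" for x a
    using f_graph that assms(1) linear_graph_unique by blast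
  have "linear f"
  proof (rule linearI)
    show "f (x + y) = f x + f y" for x y using f_eq linear_graph_add[OF assms(1) f_graph f_graph] .
    show "f (c *\<^sub>R x) = c *\<^sub>R f x" for c x using f_eq linear_graph_scaleR[OF assms(1) f_graph] by simp
  qed
  then show ?thesis using that f_graph by blast
qed

theorem hahn_banach:
  assumes nonneg: "\<And>x. 0 \<le> p x" and x0: "1 \<le> p x0"
  obtains f :: "'a \<Rightarrow> real" where "linear f" "f x0 = 1" "\<And>x. f x \<le> p x"
proof -
  have "x0 \<noteq> 0" using pos_homogeneous[of 2 0] x0 by auto
  define \<A> where "\<A> = {G. linear_graph G \<and> (x0, 1) \<in> G \<and> (\<forall>(x, a)\<in>G. a \<le> p x)}"
  have line: "range (\<lambda>t. (t *\<^sub>R x0, t)) \<in> \<A>"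
  proof -
    have "t \<le> p (t *\<^sub>R x0)" for t
      using nonneg[of "t *\<^sub>R x0"] pos_homogeneous[of t x0] mult_left_mono[OF x0, of t]
      by (cases "t > 0") auto
    moreover have "(x0, 1) = (1 *\<^sub>R x0, 1::real)" by simp
    ultimately show ?thesis unfolding \<A>_def using linear_graph_line[OF \<open>x0 \<noteq> 0\<close>] by blast
  qed
  have "\<exists>M\<in>\<A>. \<forall>X\<in>\<A>. M \<subseteq> X \<longrightarrow> X = M"
  proof (rule subset_Zorn_nonempty)
    fix \<C> assume "\<C> \<noteq> {}" and chain: "subset.chain \<A> \<C>"
    then have "\<C> \<subseteq> \<A>" by (simp add: subset_chain_def)
    then have "linear_graph (\<Union>\<C>)"
      by (intro linear_graph_chain_Union[OF chain]) (auto simp: \<A>_def)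
    with \<open>\<C> \<noteq> {}\<close> \<open>\<C> \<subseteq> \<A>\<close> show "\<Union>\<C> \<in> \<A>" by (auto simp: \<A>_def)
  qed (use line in blast)
  then obtain M where "M \<in> \<A>" and maximal: "\<And>X. X \<in> \<A> \<Longrightarrow> M \<subseteq> X \<Longrightarrow> X = M" by blast
  then have M: "linear_graph M" "(x0, 1) \<in> M" "\<forall>(x, a)\<in>M. a \<le> p x" by (simp_all add: \<A>_def)
  have total: "\<exists>a. (x, a) \<in> M" for x
  proof (rule ccontr)
    assume "\<nexists>a. (x, a) \<in> M"
    then have "x \<notin> fst ` M" by force
    with dominated_linear_graph_extend[OF M(1) linear_graph_zero[OF M(1,2)] M(3)]
    obtain G' where "linear_graph G'" "\<forall>(x, a)\<in>G'. a \<le> p x" "M \<subset> G'" by blast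
    moreover from this have "G' \<in> \<A>" using M(2) by (auto simp: \<A>_def)
    ultimately show False using maximal[of G'] by blast
  qed
  obtain f where "linear f" "\<And>x. (x, f x) \<in> M" using linear_graph_total_imp_linear[OF M(1) total] by blast
  moreover from this have "f x0 = 1" "f x \<le> p x" for x
    using M linear_graph_unique by fast+
  ultimately show ?thesis using that by blast
qed

end

section \<open>Separation of a point from a closed convex set\<close>

definition minkowski_functional :: "'a::real_normed_vector set \<Rightarrow> 'a \<Rightarrow> real" where
  "minkowski_functional U x = Inf {t. 0 < t \<and> (1 / t) *\<^sub>R x \<in> U}"

context
  fixes U :: "'a::real_normed_vector set" and r :: real
  assumes U_convex: "convex U" and r: "0 < r" and ball_subset: "ball 0 r \<subseteq> U"
begin

lemma minkowski_set_large:
  assumes "norm x / r < t"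
  shows "0 < t \<and> (1 / t) *\<^sub>R x \<in> U"
proof -
  have t: "0 < t" using assms r by (smt (verit) divide_nonneg_pos norm_ge_zero)
  have "norm ((1 / t) *\<^sub>R x) = norm x / t" using t by simp
  also have "\<dots> < r" using assms t r by (simp add: divide_less_eq mult.commute pos_divide_less_eq)
  finally show ?thesis using t ball_subset by auto
qed

lemma minkowski_set_upward:
  assumes "0 < t" "(1 / t) *\<^sub>R x \<in> U" "t \<le> t'"
  shows "(1 / t') *\<^sub>R x \<in> U"
proof -
  have "0 < t'" using assms by linarith
  have "(1 / t') *\<^sub>R x = (t / t') *\<^sub>R ((1 / t) *\<^sub>R x) + (1 - t / t') *\<^sub>R 0"
    using assms by simp
  also have "\<dots> \<in> U"
    using U_convex assms \<open>0 < t'\<close> ball_subset r by (intro convexD) auto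
  finally show ?thesis .
qed

lemma minkowski_functional_le: "0 < t \<Longrightarrow> (1 / t) *\<^sub>R x \<in> U \<Longrightarrow> minkowski_functional U x \<le> t"
  unfolding minkowski_functional_def by (rule cInf_lower) (auto intro: bdd_belowI[of _ 0])

lemma minkowski_functional_greatest:
  "(\<And>t. 0 < t \<Longrightarrow> (1 / t) *\<^sub>R x \<in> U \<Longrightarrow> c \<le> t) \<Longrightarrow> c \<le> minkowski_functional U x"
  unfolding minkowski_functional_def
  using minkowski_set_large[of x "norm x / r + 1"] by (intro cInf_greatest) auto

lemma minkowski_functional_nonneg: "0 \<le> minkowski_functional U x"
  by (rule minkowski_functional_greatest) simp

lemma minkowski_functional_le_norm: "minkowski_functional U x \<le> norm x / r"
proof (rule field_le_epsilon)
  fix e :: real assume "0 < e"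
  then show "minkowski_functional U x \<le> norm x / r + e"
    using minkowski_set_large[of x "norm x / r + e"] minkowski_functional_le by simp
qed

lemma minkowski_functional_ge_one:
  assumes "x \<notin> U"
  shows "1 \<le> minkowski_functional U x"
proof (rule minkowski_functional_greatest, rule ccontr)
  fix t assume "0 < t" "(1 / t) *\<^sub>R x \<in> U" "\<not> 1 \<le> t"
  then have "(1 / 1) *\<^sub>R x \<in> U" using minkowski_set_upward[of t x 1] by simp
  then show False using assms by simp
qed

lemma minkowski_functional_less_one:
  assumes "open U" "x \<in> U"
  shows "minkowski_functional U x < 1"
proof -
  obtain e where e: "0 < e" "ball x e \<subseteq> U" using assms open_contains_ball by blast
  define d where "d = e / (2 * (norm x + 1))"
  have d: "0 < d" "d * norm x < e"
  proof -
    have pos: "0 < 2 * (norm x + 1)" by (simp add: add_nonneg_pos)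
    then show "0 < d" using e by (simp add: d_def)
    have "norm x < 2 * (norm x + 1)" by (smt (verit) norm_ge_zero)
    then have "d * norm x < d * (2 * (norm x + 1))" using \<open>0 < d\<close> by simp
    also have "\<dots> = e" unfolding d_def using pos by simp
    finally show "d * norm x < e" .
  qed
  have "(1 + d) *\<^sub>R x \<in> ball x e"
    using d by (simp add: dist_norm algebra_simps)
  then have "(1 / (1 / (1 + d))) *\<^sub>R x \<in> U" using e by auto
  then have "minkowski_functional U x \<le> 1 / (1 + d)"
    using d by (intro minkowski_functional_le) auto
  also have "\<dots> < 1" using d by simp
  finally show ?thesis .
qed

lemma minkowski_functional_sublinear: "sublinear (minkowski_functional U)"
proof
  let ?p = "minkowski_functional U"
  show "?p (a *\<^sub>R x) = a * ?p x" if a: "0 < a" for a x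
  proof -
    have scale_le: "?p (b *\<^sub>R y) \<le> b * ?p y" if b: "0 < b" for b y
    proof -
      have "?p (b *\<^sub>R y) / b \<le> ?p y"
      proof (rule minkowski_functional_greatest)
        fix t assume "0 < t" "(1 / t) *\<^sub>R y \<in> U"
        then have "?p (b *\<^sub>R y) \<le> b * t" using b by (intro minkowski_functional_le) auto
        then show "?p (b *\<^sub>R y) / b \<le> t" using b by (simp add: divide_le_eq mult.commute)
      qed
      then show ?thesis using b by (simp add: divide_le_eq mult.commute)
    qed
    have "?p x = ?p ((1 / a) *\<^sub>R (a *\<^sub>R x))" using a by simp
    also have "\<dots> \<le> ?p (a *\<^sub>R x) / a" using scale_le[of "1 / a" "a *\<^sub>R x"] a by simp
    finally have "a * ?p x \<le> ?p (a *\<^sub>R x)" using a by (simp add: le_divide_eq mult.commute)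
    then show ?thesis using scale_le[OF a, of x] by linarith
  qed
  show "?p (x + y) \<le> ?p x + ?p y" for x y
  proof -
    have "?p (x + y) \<le> t + s"
      if t: "0 < t" "(1 / t) *\<^sub>R x \<in> U" and s: "0 < s" "(1 / s) *\<^sub>R y \<in> U" for t s
    proof -
      have "(1 / (t + s)) *\<^sub>R (x + y) = (t / (t + s)) *\<^sub>R ((1 / t) *\<^sub>R x) + (s / (t + s)) *\<^sub>R ((1 / s) *\<^sub>R y)"
        using t s by (simp add: scaleR_add_right)
      also have "\<dots> \<in> U"
        by (rule convexD[OF U_convex t(2) s(2)]) (use t s in \<open>auto simp: add_divide_distrib[symmetric]\<close>)
      finally show ?thesis using t s by (intro minkowski_functional_le) auto
    qed
    then have "?p (x + y) - s \<le> ?p x" if "0 < s" "(1 / s) *\<^sub>R y \<in> U" for s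
      using that by (intro minkowski_functional_greatest) (smt (verit))
    then have "?p (x + y) - ?p x \<le> ?p y" by (intro minkowski_functional_greatest) (smt (verit))
    then show ?thesis by simp
  qed
qed

end

lemma open_convex_separation:
  fixes U :: "'a::real_normed_vector set"
  assumes "convex U" "open U" "0 \<in> U" "x \<notin> U"
  shows "\<exists>g::'a \<Rightarrow> real. bounded_linear g \<and> g x = 1 \<and> (\<forall>u\<in>U. g u < 1)"
proof -
  obtain r where r: "0 < r" "ball 0 r \<subseteq> U" using assms(2,3) open_contains_ball by blast
  let ?p = "minkowski_functional U"
  interpret sublinear ?p using minkowski_functional_sublinear[OF assms(1) r] .
  obtain g where g: "linear g" "g x = 1" "\<And>y. g y \<le> ?p y"
    using hahn_banach minkowski_functional_nonneg[OF assms(1) r] minkowski_functional_ge_one[OF assms(1) r assms(4)]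
    by metis
  have "norm (g y) \<le> norm y * (1 / r)" for y
  proof -
    have "g y \<le> norm y / r" "- g y \<le> norm y / r"
      using g(3)[of y] g(3)[of "- y"] minkowski_functional_le_norm[OF assms(1) r, of y]
        minkowski_functional_le_norm[OF assms(1) r, of "- y"] linear_neg[OF g(1)] by auto
    then show ?thesis by simp
  qed
  then have "bounded_linear g"
    using g(1) unfolding linear_iff by (intro bounded_linear_intro[of g "1 / r"]) auto
  moreover have "g u < 1" if "u \<in> U" for u
    using g(3)[of u] minkowski_functional_less_one[OF assms(1) r assms(2) that] by linarith
  ultimately show ?thesis using g(2) by blast
qed

theorem closed_convex_point_separation:
  fixes S :: "'a::real_normed_vector set"
  assumes "closed S" "convex S" "z \<notin> S"
  obtains g :: "'a \<Rightarrow> real" and c where "bounded_linear g" "\<And>s. s \<in> S \<Longrightarrow> g s \<le> c" "c < g z"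
proof (cases "S = {}")
  case True
  then show ?thesis using that[of "\<lambda>_. 0" "-1"] bounded_linear_zero by auto
next
  case False
  then obtain s0 where s0: "s0 \<in> S" by blast
  define r where "r = infdist z S / 2"
  have r: "0 < r" unfolding r_def using infdist_pos_not_in_closed[OF assms(1) False assms(3)] by simp
  define U where "U = (\<Union>x\<in>(\<lambda>s. s - s0) ` S. \<Union>y\<in>ball 0 r. {x + y})"
  have cvx: "convex U" unfolding U_def using assms(2) by (intro convex_sums convex_translation_subtract) auto
  have opn: "open U" unfolding U_def by (intro open_sums) simp
  have zero: "0 \<in> U" unfolding U_def using s0 r by force
  have notin: "z - s0 \<notin> U"
  proof
    assume "z - s0 \<in> U"
    then obtain s v where "s \<in> S" "norm v < r" "z - s0 = (s - s0) + v" unfolding U_def by auto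
    then have "dist z s < r" by (simp add: dist_norm algebra_simps)
    moreover have "infdist z S \<le> dist z s" using \<open>s \<in> S\<close> by (rule infdist_le)
    ultimately show False using r unfolding r_def by linarith
  qed
  obtain g :: "'a \<Rightarrow> real" where g: "bounded_linear g" "g (z - s0) = 1" "\<And>u. u \<in> U \<Longrightarrow> g u < 1"
    using open_convex_separation[OF cvx opn zero notin] by blast
  define n where "n = norm (z - s0)"
  have n: "0 < n" unfolding n_def using s0 assms(3) by auto
  \<comment> \<open>The gap: \<open>U\<close> also contains \<open>s - s0 + v\<close> for the short vector \<open>v\<close> pointing to \<open>z - s0\<close>.\<close>
  define c where "c = g s0 + 1 - r / (2 * n)"
  have below: "g s \<le> c" if "s \<in> S" for s
  proof -
    define v where "v = (r / (2 * n)) *\<^sub>R (z - s0)"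
    have "norm v < r" unfolding v_def using n r by (simp add: n_def)
    then have "(s - s0) + v \<in> U" unfolding U_def using that by force
    then have "g ((s - s0) + v) < 1" by (rule g(3))
    moreover have "g v = r / (2 * n)"
      using g(2) unfolding v_def by (simp add: linear_scale[OF bounded_linear.linear[OF g(1)]])
    then have "g ((s - s0) + v) = g s - g s0 + r / (2 * n)"
      by (simp add: linear_add linear_diff bounded_linear.linear[OF g(1)])
    ultimately show ?thesis unfolding c_def by simp
  qed
  have "0 < r / (2 * n)" using r n by simp
  then have "c < g z"
    using g(2) unfolding c_def by (simp add: linear_diff bounded_linear.linear[OF g(1)])
  then show ?thesis using that g(1) below by metis
qed

section \<open>Weak cluster points in reflexive spaces\<close>

lemma canon_emb_apply [simp]: "blinfun_apply (canon_emb x) p = blinfun_apply p x"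
  unfolding canon_emb_def by (simp add: bounded_linear_Blinfun_apply)

lemma reflexive_space_represent:
  fixes \<Phi> :: "('a::real_normed_vector \<Rightarrow>\<^sub>L real) \<Rightarrow> real"
  assumes "reflexive_space TYPE('a)" "bounded_linear \<Phi>"
  obtains x :: 'a where "\<And>p. blinfun_apply p x = \<Phi> p"
proof -
  obtain x :: 'a where "canon_emb x = Blinfun \<Phi>"
    using assms(1) unfolding reflexive_space_def by (metis surjD)
  then have "blinfun_apply p x = \<Phi> p" for p
    using assms(2) canon_emb_apply[of x p] by (simp add: bounded_linear_Blinfun_apply)
  then show ?thesis by (rule that)
qed

lemma reflexive_space_prod:
  assumes "reflexive_space TYPE('a::real_normed_vector)" "reflexive_space TYPE('b::real_normed_vector)"
  shows "reflexive_space TYPE('a \<times> 'b)"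
  unfolding reflexive_space_def surj_def
proof
  fix \<Psi> :: "(('a \<times> 'b) \<Rightarrow>\<^sub>L real) \<Rightarrow>\<^sub>L real"
  have compose_right: "bounded_linear (\<lambda>p. blinfun_apply \<Psi> (p o\<^sub>L q))" for q :: "('a \<times> 'b) \<Rightarrow>\<^sub>L 'c::real_normed_vector"
    by (intro bounded_linear_compose[OF blinfun.bounded_linear_right]
        bounded_bilinear.bounded_linear_left[OF bounded_bilinear_blinfun_compose])
  obtain x :: 'a where x: "\<And>p. blinfun_apply p x = \<Psi> (p o\<^sub>L fst_blinfun)"
    using reflexive_space_represent[OF assms(1) compose_right] by blast
  obtain y :: 'b where y: "\<And>q. blinfun_apply q y = \<Psi> (q o\<^sub>L snd_blinfun)"
    using reflexive_space_represent[OF assms(2) compose_right] by blast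
  define inl :: "'a \<Rightarrow>\<^sub>L ('a \<times> 'b)" where "inl = Blinfun (\<lambda>u. (u, 0))"
  define inr :: "'b \<Rightarrow>\<^sub>L ('a \<times> 'b)" where "inr = Blinfun (\<lambda>v. (0, v))"
  have inl [simp]: "inl u = (u, 0)" and inr [simp]: "inr v = (0, v)" for u v
    unfolding inl_def inr_def
    by (simp_all add: bounded_linear_Blinfun_apply bounded_linear_Pair bounded_linear_ident bounded_linear_zero)
  have "canon_emb (x, y) = \<Psi>"
  proof (rule blinfun_eqI)
    fix h :: "('a \<times> 'b) \<Rightarrow>\<^sub>L real"
    have h_split: "h (u, v) = h (u, 0) + h (0, v)" for u v
      using blinfun.add_right[of h "(u, 0)" "(0, v)"] by simp
    have split: "h = ((h o\<^sub>L inl) o\<^sub>L fst_blinfun) + ((h o\<^sub>L inr) o\<^sub>L snd_blinfun)"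
    proof (rule blinfun_eqI)
      fix w :: "'a \<times> 'b"
      show "h w = (((h o\<^sub>L inl) o\<^sub>L fst_blinfun) + ((h o\<^sub>L inr) o\<^sub>L snd_blinfun)) w"
        using h_split[of "fst w" "snd w"] by (simp add: blinfun.add_left)
    qed
    have "canon_emb (x, y) h = h (x, 0) + h (0, y)"
      using h_split[of x y] by simp
    also have "\<dots> = \<Psi> ((h o\<^sub>L inl) o\<^sub>L fst_blinfun) + \<Psi> ((h o\<^sub>L inr) o\<^sub>L snd_blinfun)"
      using x[of "h o\<^sub>L inl"] y[of "h o\<^sub>L inr"] by simp
    also have "\<dots> = \<Psi> h" by (subst (3) split) (simp add: blinfun.add_right)
    finally show "canon_emb (x, y) h = \<Psi> h" .
  qed
  then show "\<exists>z. \<Psi> = canon_emb z" by metis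
qed

lemma cluster_point_in_closed:
  assumes "inf (nhds x) F \<noteq> bot" "closed S" "eventually (\<lambda>y. y \<in> S) F"
  shows "x \<in> S"
proof (rule ccontr)
  assume "x \<notin> S"
  then have "eventually (\<lambda>y. y \<in> - S) (nhds x)" using assms(2) by (intro eventually_nhds_in_open) auto
  then have "eventually (\<lambda>y. y \<in> - S) (inf (nhds x) F)" by (rule filter_leD[OF inf_le1])
  moreover have "eventually (\<lambda>y. y \<in> S) (inf (nhds x) F)" using assms(3) by (rule filter_leD[OF inf_le2])
  ultimately have "eventually (\<lambda>y. False) (inf (nhds x) F)" by (rule eventually_elim2) auto
  then show False using assms(1) eventually_False by blast
qed

lemma compact_PiE_intervals: "compact (PiE UNIV (\<lambda>i. {a i..b i :: real}))"
proof -
  have "compactin (product_topology (\<lambda>i. euclidean) UNIV) (PiE UNIV (\<lambda>i. {a i..b i}))"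
    by (subst compactin_PiE) auto
  then show ?thesis unfolding euclidean_product_topology by simp
qed

text \<open>Banach--Alaoglu in the bidual: the functionals \<open>p \<mapsto> p (z i)\<close> of a bounded net lie in a
  product of compact intervals, so by Tychonoff they have a cluster point \<open>\<Psi>\<close>.\<close>

lemma bounded_net_evaluation_cluster:
  fixes z :: "'i \<Rightarrow> 'a::real_normed_vector"
  assumes "F \<noteq> bot" "eventually (\<lambda>i. norm (z i) \<le> R) F"
  obtains \<Psi> :: "('a \<Rightarrow>\<^sub>L real) \<Rightarrow> real" where "\<And>p. \<bar>\<Psi> p\<bar> \<le> R * norm p"
    "\<And>S. closed S \<Longrightarrow> eventually (\<lambda>i. (\<lambda>p. blinfun_apply p (z i)) \<in> S) F \<Longrightarrow> \<Psi> \<in> S"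
proof -
  define ev :: "'i \<Rightarrow> ('a \<Rightarrow>\<^sub>L real) \<Rightarrow> real" where "ev i = (\<lambda>p. p (z i))" for i
  define Box where "Box = PiE UNIV (\<lambda>p::'a \<Rightarrow>\<^sub>L real. {- (R * norm p)..R * norm p})"
  have "eventually (\<lambda>i. ev i \<in> Box) F"
    using assms(2)
  proof eventually_elim
    case (elim i)
    have bound: "\<bar>p (z i)\<bar> \<le> R * norm p" for p :: "'a \<Rightarrow>\<^sub>L real"
      using norm_blinfun[of p "z i"] mult_left_mono[OF elim, of "norm p"] by (simp add: mult.commute)
    have "ev i p \<in> {- (R * norm p)..R * norm p}" for p
      using bound[of p] unfolding ev_def by (simp add: abs_le_iff)
    then show ?case unfolding Box_def PiE_UNIV_domain by (simp add: Pi_iff)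
  qed
  then have "eventually (\<lambda>g. g \<in> Box) (filtermap ev F)" by (simp add: eventually_filtermap)
  moreover have "filtermap ev F \<noteq> bot" using assms(1) by (simp add: filtermap_bot_iff)
  ultimately obtain \<Psi> :: "('a \<Rightarrow>\<^sub>L real) \<Rightarrow> real" where "\<Psi> \<in> Box" and cluster: "inf (nhds \<Psi>) (filtermap ev F) \<noteq> bot"
    using compact_PiE_intervals[of "\<lambda>p. - (R * norm p)" "\<lambda>p. R * norm p", unfolded compact_filter]
    unfolding Box_def by blast
  have "\<bar>\<Psi> p\<bar> \<le> R * norm p" for p
  proof -
    have "\<Psi> p \<in> {- (R * norm p)..R * norm p}" using \<open>\<Psi> \<in> Box\<close> unfolding Box_def by (rule PiE_mem) simp
    then show ?thesis by (simp add: abs_le_iff)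
  qed
  moreover have "\<Psi> \<in> S" if "closed S" "eventually (\<lambda>i. (\<lambda>p. blinfun_apply p (z i)) \<in> S) F" for S
    using cluster_point_in_closed[OF cluster that(1)] that(2) by (simp add: eventually_filtermap ev_def)
  ultimately show ?thesis by (rule that)
qed

lemma bounded_net_bidual_cluster:
  fixes z :: "'i \<Rightarrow> 'a::real_normed_vector"
  assumes "F \<noteq> bot" "eventually (\<lambda>i. norm (z i) \<le> R) F"
  obtains \<Psi> :: "('a \<Rightarrow>\<^sub>L real) \<Rightarrow> real" where "bounded_linear \<Psi>"
    "\<And>p c. eventually (\<lambda>i. blinfun_apply p (z i) \<le> c) F \<Longrightarrow> \<Psi> p \<le> c"
proof -
  obtain \<Psi> :: "('a \<Rightarrow>\<^sub>L real) \<Rightarrow> real" where bound: "\<And>p. \<bar>\<Psi> p\<bar> \<le> R * norm p"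
    and closed_limit: "\<And>S. closed S \<Longrightarrow> eventually (\<lambda>i. (\<lambda>p. blinfun_apply p (z i)) \<in> S) F \<Longrightarrow> \<Psi> \<in> S"
    using bounded_net_evaluation_cluster[OF assms] by blast
  have coordinate: "continuous_on UNIV (\<lambda>g::('a \<Rightarrow>\<^sub>L real) \<Rightarrow> real. g p)" for p
    by (rule continuous_on_product_coordinates)
  have closed_add: "closed {g :: ('a \<Rightarrow>\<^sub>L real) \<Rightarrow> real. g (p + q) = g p + g q}" for p q
    by (intro closed_Collect_eq continuous_intros coordinate)
  have closed_scale: "closed {g :: ('a \<Rightarrow>\<^sub>L real) \<Rightarrow> real. g (c *\<^sub>R p) = c * g p}" for c p
    by (intro closed_Collect_eq continuous_intros coordinate)
  have closed_le: "closed {g :: ('a \<Rightarrow>\<^sub>L real) \<Rightarrow> real. g p \<le> c}" for p c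
    by (intro closed_Collect_le continuous_intros coordinate)
  have "bounded_linear \<Psi>"
  proof (rule bounded_linear_intro)
    show "\<Psi> (p + q) = \<Psi> p + \<Psi> q" for p q
      using closed_limit[OF closed_add[of p q]] by (simp add: blinfun.add_left)
    show "\<Psi> (c *\<^sub>R p) = c *\<^sub>R \<Psi> p" for c p
      using closed_limit[OF closed_scale[of c p]] by (simp add: blinfun.scaleR_left)
    show "norm (\<Psi> p) \<le> norm p * R" for p
      using bound[of p] by (simp add: mult.commute)
  qed
  moreover have "\<Psi> p \<le> c" if "eventually (\<lambda>i. blinfun_apply p (z i) \<le> c) F" for p c
    using closed_limit[OF closed_le[of p c]] that by simp
  ultimately show ?thesis by (rule that)
qed

theorem reflexive_bounded_net_weak_cluster:
  fixes z :: "'i \<Rightarrow> 'a::real_normed_vector"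
  assumes "reflexive_space TYPE('a)" "F \<noteq> bot" "eventually (\<lambda>i. norm (z i) \<le> R) F"
  obtains zb where "\<And>K. closed K \<Longrightarrow> convex K \<Longrightarrow> eventually (\<lambda>i. z i \<in> K) F \<Longrightarrow> zb \<in> K"
proof -
  obtain \<Psi> :: "('a \<Rightarrow>\<^sub>L real) \<Rightarrow> real" where "bounded_linear \<Psi>"
    and \<Psi>_le: "\<And>p c. eventually (\<lambda>i. blinfun_apply p (z i) \<le> c) F \<Longrightarrow> \<Psi> p \<le> c"
    using bounded_net_bidual_cluster[OF assms(2,3)] by blast
  then obtain zb where zb: "\<And>p. blinfun_apply p zb = \<Psi> p"
    using reflexive_space_represent[OF assms(1)] by blast
  have "zb \<in> K" if K: "closed K" "convex K" and eventually: "eventually (\<lambda>i. z i \<in> K) F" for K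
  proof (rule ccontr)
    assume "zb \<notin> K"
    then obtain g :: "'a \<Rightarrow> real" and c where g: "bounded_linear g" "\<And>s. s \<in> K \<Longrightarrow> g s \<le> c" "c < g zb"
      using closed_convex_point_separation[OF K] by blast
    have "eventually (\<lambda>i. blinfun_apply (Blinfun g) (z i) \<le> c) F"
      using eventually by eventually_elim (simp add: g bounded_linear_Blinfun_apply)
    then have "g zb \<le> c" using \<Psi>_le zb[of "Blinfun g"] g(1) by (simp add: bounded_linear_Blinfun_apply)
    then show False using g(3) by simp
  qed
  then show ?thesis by (rule that)
qed

section \<open>Lower semicontinuity relative to a set\<close>

definition lsc_on :: "'a::metric_space set \<Rightarrow> ('a \<Rightarrow> real) \<Rightarrow> bool" where
  "lsc_on C f \<longleftrightarrow> (\<forall>x\<in>C. \<forall>e>0. \<exists>d>0. \<forall>y\<in>C. dist y x < d \<longrightarrow> f x - e < f y)"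

lemma lsc_onD:
  assumes "lsc_on C f" "x \<in> C" "0 < e"
  obtains d where "0 < d" "\<And>y. y \<in> C \<Longrightarrow> dist y x < d \<Longrightarrow> f x - e < f y"
  using assms unfolding lsc_on_def by blast

lemma lsc_on_subset: "lsc_on C f \<Longrightarrow> D \<subseteq> C \<Longrightarrow> lsc_on D f"
  unfolding lsc_on_def by (meson subsetD)

lemma lsc_on_const: "lsc_on C (\<lambda>x. a)"
  by (auto simp: lsc_on_def)

lemma continuous_on_imp_lsc_on: "continuous_on C f \<Longrightarrow> lsc_on C f"
  unfolding lsc_on_def continuous_on_iff dist_real_def by (metis abs_minus_commute abs_diff_less_iff)

lemma lsc_on_add:
  assumes "lsc_on C f" "lsc_on C g"
  shows "lsc_on C (\<lambda>x. f x + g x)"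
  unfolding lsc_on_def
proof (intro ballI allI impI)
  fix x and e :: real assume x: "x \<in> C" and e: "0 < e"
  obtain d1 where d1: "0 < d1" "\<And>y. y \<in> C \<Longrightarrow> dist y x < d1 \<Longrightarrow> f x - e / 2 < f y"
    using lsc_onD[OF assms(1) x, of "e / 2"] e by auto
  obtain d2 where d2: "0 < d2" "\<And>y. y \<in> C \<Longrightarrow> dist y x < d2 \<Longrightarrow> g x - e / 2 < g y"
    using lsc_onD[OF assms(2) x, of "e / 2"] e by auto
  have "f x + g x - e < f y + g y" if "y \<in> C" "dist y x < min d1 d2" for y
    using d1(2)[of y] d2(2)[of y] that by simp
  then show "\<exists>d>0. \<forall>y\<in>C. dist y x < d \<longrightarrow> f x + g x - e < f y + g y"
    using d1(1) d2(1) by (intro exI[of _ "min d1 d2"]) auto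
qed

lemma lsc_on_cmult:
  assumes "lsc_on C f" "0 \<le> a"
  shows "lsc_on C (\<lambda>x. a * f x)"
proof (cases "a = 0")
  case True
  then show ?thesis using lsc_on_const[of C 0] by simp
next
  case False
  with assms(2) have a: "0 < a" by simp
  show ?thesis
    unfolding lsc_on_def
  proof (intro ballI allI impI)
    fix x and e :: real assume x: "x \<in> C" and e: "0 < e"
    obtain d where d: "0 < d" "\<And>y. y \<in> C \<Longrightarrow> dist y x < d \<Longrightarrow> f x - e / a < f y"
      using lsc_onD[OF assms(1) x, of "e / a"] e a by auto
    have "a * f x - e < a * f y" if "y \<in> C" "dist y x < d" for y
      using mult_strict_left_mono[OF d(2)[OF that] a] a by (simp add: right_diff_distrib)
    then show "\<exists>d>0. \<forall>y\<in>C. dist y x < d \<longrightarrow> a * f x - e < a * f y" using d(1) by blast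
  qed
qed

lemma lsc_on_sum:
  "finite I \<Longrightarrow> (\<And>i. i \<in> I \<Longrightarrow> lsc_on C (h i)) \<Longrightarrow> lsc_on C (\<lambda>x. \<Sum>i\<in>I. h i x)"
  by (induction I rule: finite_induct) (auto intro: lsc_on_add lsc_on_const)

lemma compact_lsc_on_sublevel:
  assumes "compact K" "lsc_on K f"
  shows "compact {x\<in>K. f x \<le> c}"
proof -
  have "x \<in> {x\<in>K. f x \<le> c}" if x_closure: "x \<in> closure {x\<in>K. f x \<le> c}" for x
  proof -
    have x: "x \<in> K"
      using x_closure closure_mono[of "{x\<in>K. f x \<le> c}" K] compact_imp_closed[OF assms(1)] by auto
    have "\<not> c < f x"
    proof
      assume "c < f x"
      then obtain d where d: "0 < d" "\<And>y. y \<in> K \<Longrightarrow> dist y x < d \<Longrightarrow> f x - (f x - c) < f y"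
        using lsc_onD[OF assms(2) x, of "f x - c"] by auto
      obtain y where "y \<in> K" "f y \<le> c" "dist y x < d"
        using x_closure d(1) unfolding closure_approachable by blast
      then show False using d(2) by fastforce
    qed
    then show ?thesis using x by simp
  qed
  then have "closed {x\<in>K. f x \<le> c}" by (meson closure_subset_eq subsetI)
  then have "compact (K \<inter> {x\<in>K. f x \<le> c})" by (rule compact_Int_closed[OF assms(1)])
  moreover have "K \<inter> {x\<in>K. f x \<le> c} = {x\<in>K. f x \<le> c}" by blast
  ultimately show ?thesis by simp
qed

lemma convex_on_sum_functions:
  "finite I \<Longrightarrow> convex C \<Longrightarrow> (\<And>i. i \<in> I \<Longrightarrow> convex_on C (h i)) \<Longrightarrow> convex_on C (\<lambda>x. \<Sum>i\<in>I. h i x)"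
  by (induction I rule: finite_induct) (auto simp: convex_on_const)

lemma convex_sublevel: "convex_on C f \<Longrightarrow> convex {x\<in>C. f x \<le> c}"
  unfolding convex_on_def convex_def
proof (clarify)
  fix x y and u v :: real
  assume "\<forall>x\<in>C. \<forall>y\<in>C. \<forall>u\<ge>0. \<forall>v\<ge>0. u + v = 1 \<longrightarrow> u *\<^sub>R x + v *\<^sub>R y \<in> C"
    and f: "\<forall>x\<in>C. \<forall>y\<in>C. \<forall>u\<ge>0. \<forall>v\<ge>0. u + v = 1 \<longrightarrow> f (u *\<^sub>R x + v *\<^sub>R y) \<le> u * f x + v * f y"
    and h: "x \<in> C" "f x \<le> c" "y \<in> C" "f y \<le> c" "0 \<le> u" "0 \<le> v" "u + v = 1"
  moreover have "f (u *\<^sub>R x + v *\<^sub>R y) \<le> u * f x + v * f y" using f h by blast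
  moreover have "u * f x + v * f y \<le> u * c + v * c" using h by (intro add_mono mult_left_mono) auto
  ultimately show "u *\<^sub>R x + v *\<^sub>R y \<in> C \<and> f (u *\<^sub>R x + v *\<^sub>R y) \<le> c"
    by (metis distrib_right mult_1 order_trans)
qed

section \<open>Ky Fan's minimax inequality\<close>

lemma lsc_on_segment_combination:
  assumes lf: "lsc_on C f" and lg: "lsc_on C g"
  shows "lsc_on ({0..1} \<times> C) (\<lambda>(t, \<mu>). (1 - t) * f \<mu> + t * g \<mu>)"
  unfolding lsc_on_def
proof (intro ballI allI impI)
  fix q :: "real \<times> 'a" and e :: real assume q: "q \<in> {0..1} \<times> C" and e: "0 < e"
  obtain t \<mu> where tm: "q = (t, \<mu>)" "\<mu> \<in> C" using q by auto
  define M where "M = \<bar>f \<mu>\<bar> + \<bar>g \<mu>\<bar> + 1"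
  have M: "0 < M" unfolding M_def by simp
  obtain d1 where d1: "0 < d1" "\<And>y. y \<in> C \<Longrightarrow> dist y \<mu> < d1 \<Longrightarrow> f \<mu> - e / 2 < f y"
    using lsc_onD[OF lf tm(2), of "e / 2"] e by auto
  obtain d2 where d2: "0 < d2" "\<And>y. y \<in> C \<Longrightarrow> dist y \<mu> < d2 \<Longrightarrow> g \<mu> - e / 2 < g y"
    using lsc_onD[OF lg tm(2), of "e / 2"] e by auto
  define d where "d = min (min d1 d2) (e / (2 * M))"
  have "(1 - t) * f \<mu> + t * g \<mu> - e < (1 - t') * f \<mu>' + t' * g \<mu>'"
    if "t' \<in> {0..1}" "\<mu>' \<in> C" "dist (t', \<mu>') q < d" for t' \<mu>'
  proof -
    have "\<bar>t' - t\<bar> < e / (2 * M)" "dist \<mu>' \<mu> < d1" "dist \<mu>' \<mu> < d2"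
      using that(3) dist_fst_le[of "(t', \<mu>')" q] dist_snd_le[of "(t', \<mu>')" q]
      unfolding d_def tm(1) by (auto simp: dist_real_def)
    then have "f \<mu> - e / 2 < f \<mu>'" "g \<mu> - e / 2 < g \<mu>'" and dt: "\<bar>t' - t\<bar> * M < e / 2"
      using d1(2) d2(2) that(2) M by (auto simp: less_divide_eq mult_ac)
    then have "(1 - t') * (f \<mu> - e / 2) + t' * (g \<mu> - e / 2) \<le> (1 - t') * f \<mu>' + t' * g \<mu>'"
      using that(1) by (intro add_mono mult_left_mono) auto
    moreover have "(1 - t') * (f \<mu> - e / 2) + t' * (g \<mu> - e / 2) = (1 - t') * f \<mu> + t' * g \<mu> - e / 2"
      by (simp add: field_simps)
    moreover have "\<bar>((1 - t') * f \<mu> + t' * g \<mu>) - ((1 - t) * f \<mu> + t * g \<mu>)\<bar> \<le> \<bar>t' - t\<bar> * M"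
    proof -
      have "\<bar>((1 - t') * f \<mu> + t' * g \<mu>) - ((1 - t) * f \<mu> + t * g \<mu>)\<bar> = \<bar>t' - t\<bar> * \<bar>g \<mu> - f \<mu>\<bar>"
        by (simp add: algebra_simps abs_mult[symmetric])
      also have "\<dots> \<le> \<bar>t' - t\<bar> * M" unfolding M_def by (intro mult_left_mono) auto
      finally show ?thesis .
    qed
    ultimately show ?thesis using dt unfolding abs_le_iff by linarith
  qed
  moreover have "0 < d" unfolding d_def using d1 d2 e M by simp
  ultimately show "\<exists>d>0. \<forall>y\<in>{0..1} \<times> C. dist y q < d \<longrightarrow>
      (case q of (t, \<mu>) \<Rightarrow> (1 - t) * f \<mu> + t * g \<mu>) - e < (case y of (t, \<mu>) \<Rightarrow> (1 - t) * f \<mu> + t * g \<mu>)"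
    unfolding tm(1) by fastforce
qed

lemma closed_segment_sublevel_parameters:
  assumes "compact X" "lsc_on X f" "lsc_on X g"
  shows "closed {t\<in>{0..1}. \<exists>\<mu>\<in>X. (1 - t) * f \<mu> + t * g \<mu> \<le> (0::real)}"
proof -
  let ?H = "\<lambda>(t, \<mu>). (1 - t) * f \<mu> + t * g \<mu>"
  have "compact {q\<in>{0..1} \<times> X. ?H q \<le> 0}"
    using assms by (intro compact_lsc_on_sublevel compact_Times lsc_on_segment_combination) auto
  then have "compact (fst ` {q\<in>{0..1} \<times> X. ?H q \<le> 0})"
    by (intro compact_continuous_image continuous_intros)
  moreover have "fst ` {q\<in>{0..1} \<times> X. ?H q \<le> 0} = {t\<in>{0..1}. \<exists>\<mu>\<in>X. (1 - t) * f \<mu> + t * g \<mu> \<le> 0}"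
    by force
  ultimately show ?thesis by (simp add: compact_imp_closed)
qed

text \<open>If no point of \<open>C\<close> lies in both closed sets \<open>A = {f \<le> 0}\<close> and \<open>B = {g \<le> 0}\<close>, each
  convex (hence connected) set \<open>{(1 - t) f + t g \<le> 0}\<close> lies in \<open>A \<union> B\<close> and so meets only
  one of them. This splits \<open>[0, 1]\<close> into two disjoint nonempty closed sets.\<close>

lemma minimax_two:
  fixes f g :: "'a::real_normed_vector \<Rightarrow> real"
  assumes C: "compact C" and cf: "convex_on C f" and cg: "convex_on C g"
    and lf: "lsc_on C f" and lg: "lsc_on C g"
    and hyp: "\<And>t. 0 \<le> t \<Longrightarrow> t \<le> 1 \<Longrightarrow> \<exists>\<mu>\<in>C. (1 - t) * f \<mu> + t * g \<mu> \<le> 0"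
  shows "\<exists>\<mu>\<in>C. f \<mu> \<le> 0 \<and> g \<mu> \<le> 0"
proof (rule ccontr)
  assume no_common: "\<not> ?thesis"
  define A where "A = {\<mu>\<in>C. f \<mu> \<le> 0}"
  define B where "B = {\<mu>\<in>C. g \<mu> \<le> 0}"
  define S where "S t = {\<mu>\<in>C. (1 - t) * f \<mu> + t * g \<mu> \<le> 0}" for t
  define T where "T X = {t\<in>{0..1}. \<exists>\<mu>\<in>X. (1 - t) * f \<mu> + t * g \<mu> \<le> 0}" for X
  have "compact A" "compact B"
    unfolding A_def B_def using compact_lsc_on_sublevel C lf lg by blast+
  have "A \<subseteq> C" "B \<subseteq> C" unfolding A_def B_def by auto
  have S_AB: "S t \<subseteq> A \<union> B" if "0 \<le> t" "t \<le> 1" for t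
  proof
    fix \<mu> assume "\<mu> \<in> S t"
    then have "\<mu> \<in> C" "(1 - t) * f \<mu> + t * g \<mu> \<le> 0" unfolding S_def by auto
    then show "\<mu> \<in> A \<union> B"
      unfolding A_def B_def using that by (smt (verit) mult_nonneg_nonneg mult_pos_pos Un_iff mem_Collect_eq)
  qed
  have "closed (T A)"
    unfolding T_def using \<open>compact A\<close> lsc_on_subset[OF lf \<open>A \<subseteq> C\<close>] lsc_on_subset[OF lg \<open>A \<subseteq> C\<close>]
    by (rule closed_segment_sublevel_parameters)
  moreover have "closed (T B)"
    unfolding T_def using \<open>compact B\<close> lsc_on_subset[OF lf \<open>B \<subseteq> C\<close>] lsc_on_subset[OF lg \<open>B \<subseteq> C\<close>]
    by (rule closed_segment_sublevel_parameters)
  moreover have "{0..1} \<subseteq> T A \<union> T B"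
  proof
    fix t :: real assume t: "t \<in> {0..1}"
    then obtain \<mu> where "\<mu> \<in> S t" using hyp[of t] unfolding S_def by auto
    with t show "t \<in> T A \<union> T B" using S_AB[of t] unfolding T_def S_def by auto
  qed
  moreover have "T A \<inter> {0..1} \<noteq> {}" "T B \<inter> {0..1} \<noteq> {}"
  proof -
    have "0 \<in> T A" "1 \<in> T B" using hyp[of 0] hyp[of 1] unfolding T_def A_def B_def by auto
    then show "T A \<inter> {0..1} \<noteq> {}" "T B \<inter> {0..1} \<noteq> {}" by auto
  qed
  ultimately have "T A \<inter> T B \<inter> {0..1} \<noteq> {}"
    using connected_Icc[of "0::real" 1] unfolding connected_closed by meson
  then obtain t where t: "0 \<le> t" "t \<le> 1" "t \<in> T A" "t \<in> T B" by auto
  then have "A \<inter> S t \<noteq> {}" "B \<inter> S t \<noteq> {}"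
    using \<open>A \<subseteq> C\<close> \<open>B \<subseteq> C\<close> unfolding T_def S_def by auto
  moreover have "connected (S t)"
  proof -
    have "convex_on C (\<lambda>\<mu>. (1 - t) * f \<mu> + t * g \<mu>)"
      using t cf cg by (intro convex_on_add convex_on_cmul) auto
    then show ?thesis unfolding S_def by (intro convex_connected convex_sublevel)
  qed
  moreover have "closed A" "closed B" "A \<inter> B = {}"
    using \<open>compact A\<close> \<open>compact B\<close> no_common unfolding A_def B_def by (auto simp: compact_imp_closed)
  ultimately show False using S_AB[OF t(1,2)] unfolding connected_closed by blast
qed

lemma minimax_insert_step:
  fixes h :: "'i \<Rightarrow> 'a::real_normed_vector \<Rightarrow> real"
  assumes "finite I" "j \<notin> I" "compact C"
    and convex: "\<And>i. i \<in> insert j I \<Longrightarrow> convex_on C (h i)"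
    and lsc: "\<And>i. i \<in> insert j I \<Longrightarrow> lsc_on C (h i)"
    and hyp: "\<And>l. \<forall>i\<in>insert j I. 0 \<le> l i \<Longrightarrow> sum l (insert j I) = 1 \<Longrightarrow>
      \<exists>\<mu>\<in>C. (\<Sum>i\<in>insert j I. l i * h i \<mu>) \<le> 0"
    and l: "\<forall>i\<in>I. 0 \<le> l i" "sum l I = 1"
  shows "\<exists>\<mu>\<in>C. (\<Sum>i\<in>I. l i * h i \<mu>) \<le> 0 \<and> h j \<mu> \<le> 0"
proof (rule minimax_two[OF assms(3)])
  show "convex_on C (\<lambda>\<mu>. \<Sum>i\<in>I. l i * h i \<mu>)"
    using convex l convex_on_imp_convex[OF convex[of j]]
    by (intro convex_on_sum_functions[OF assms(1)] convex_on_cmul) auto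
  show "lsc_on C (\<lambda>\<mu>. \<Sum>i\<in>I. l i * h i \<mu>)"
    using lsc l by (intro lsc_on_sum[OF assms(1)] lsc_on_cmult) auto
  show "convex_on C (h j)" "lsc_on C (h j)" using convex lsc by auto
  fix t :: real assume t: "0 \<le> t" "t \<le> 1"
  define l' where "l' i = (if i = j then t else (1 - t) * l i)" for i
  have "sum l' I = (1 - t) * sum l I"
    unfolding l'_def sum_distrib_left using assms(2) by (intro sum.cong) auto
  then have "sum l' (insert j I) = 1" using assms(1,2) l by (simp add: l'_def)
  moreover have "\<forall>i\<in>insert j I. 0 \<le> l' i" using t l unfolding l'_def by auto
  ultimately obtain \<mu> where "\<mu> \<in> C" "(\<Sum>i\<in>insert j I. l' i * h i \<mu>) \<le> 0" using hyp by blast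
  moreover have "(\<Sum>i\<in>insert j I. l' i * h i \<mu>) = (1 - t) * (\<Sum>i\<in>I. l i * h i \<mu>) + t * h j \<mu>"
    using assms(1,2) unfolding l'_def sum_distrib_left by (auto intro!: sum.cong)
  ultimately show "\<exists>\<mu>\<in>C. (1 - t) * (\<Sum>i\<in>I. l i * h i \<mu>) + t * h j \<mu> \<le> 0" by auto
qed

text \<open>Induction on \<open>I\<close>: passing to the compact convex sublevel set \<open>{h j \<le> 0}\<close> of \<open>C\<close>
  preserves the hypothesis, by the two-function case applied to \<open>h j\<close> and a convex
  combination of the remaining functions.\<close>

theorem minimax_finite:
  fixes h :: "'i \<Rightarrow> 'a::real_normed_vector \<Rightarrow> real"
  assumes "finite I" "I \<noteq> {}" "compact C"
    and "\<And>i. i \<in> I \<Longrightarrow> convex_on C (h i)" "\<And>i. i \<in> I \<Longrightarrow> lsc_on C (h i)"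
    and "\<And>l. \<forall>i\<in>I. 0 \<le> l i \<Longrightarrow> sum l I = 1 \<Longrightarrow> \<exists>\<mu>\<in>C. (\<Sum>i\<in>I. l i * h i \<mu>) \<le> 0"
  shows "\<exists>\<mu>\<in>C. \<forall>i\<in>I. h i \<mu> \<le> 0"
  using assms
proof (induction I arbitrary: C rule: finite_ne_induct)
  case (singleton j)
  then show ?case using singleton.prems(4)[of "\<lambda>_. 1"] by simp
next
  case (insert j I)
  define C' where "C' = {\<mu>\<in>C. h j \<mu> \<le> 0}"
  have compact: "compact C'" unfolding C'_def using insert.prems by (intro compact_lsc_on_sublevel) auto
  have "C' \<subseteq> C" unfolding C'_def by blast
  have "convex C'" unfolding C'_def using insert.prems(2) by (intro convex_sublevel) auto
  have convex: "convex_on C' (h i)" if "i \<in> I" for i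
    using convex_on_subset[OF insert.prems(2) \<open>C' \<subseteq> C\<close> \<open>convex C'\<close>] that by blast
  have lsc: "lsc_on C' (h i)" if "i \<in> I" for i
    using lsc_on_subset[OF insert.prems(3) \<open>C' \<subseteq> C\<close>] that by blast
  have hyp: "\<exists>\<mu>\<in>C'. (\<Sum>i\<in>I. l i * h i \<mu>) \<le> 0" if l: "\<forall>i\<in>I. 0 \<le> l i" "sum l I = 1" for l
  proof -
    obtain \<mu> where "\<mu> \<in> C" "(\<Sum>i\<in>I. l i * h i \<mu>) \<le> 0 \<and> h j \<mu> \<le> 0"
      using minimax_insert_step[OF insert.hyps(1,3) insert.prems l] by blast
    then show ?thesis unfolding C'_def by blast
  qed
  obtain \<mu> where "\<mu> \<in> C'" "\<forall>i\<in>I. h i \<mu> \<le> 0"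
    using insert.IH[OF compact convex lsc hyp] by blast
  then show ?case unfolding C'_def by auto
qed

section \<open>Equilibria of skew couplings\<close>

lemma proper_fun_domE:
  assumes "proper_fun \<phi>" "z \<in> dom_fun \<phi>"
  obtains r where "\<phi> z = ereal r"
  using assms unfolding proper_fun_def dom_fun_def by (cases "\<phi> z") auto

lemma convex_on_dom_fun:
  assumes proper: "proper_fun \<phi>" and convex: "convex_fun \<phi>"
  shows "convex_on (dom_fun \<phi>) (\<lambda>z. real_of_ereal (\<phi> z))"
proof -
  let ?f = "\<lambda>z. real_of_ereal (\<phi> z)"
  have step: "t *\<^sub>R x + (1 - t) *\<^sub>R y \<in> dom_fun \<phi> \<and> ?f (t *\<^sub>R x + (1 - t) *\<^sub>R y) \<le> t * ?f x + (1 - t) * ?f y"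
    if xy: "x \<in> dom_fun \<phi>" "y \<in> dom_fun \<phi>" and t: "0 < t" "t < 1" for x y t
  proof -
    obtain a b where a: "\<phi> x = ereal a" and b: "\<phi> y = ereal b"
      using proper_fun_domE[OF proper xy(1)] proper_fun_domE[OF proper xy(2)] by metis
    have "\<phi> (t *\<^sub>R x + (1 - t) *\<^sub>R y) \<le> ereal t * \<phi> x + ereal (1 - t) * \<phi> y"
      using convex t unfolding convex_fun_def by blast
    then have le: "\<phi> (t *\<^sub>R x + (1 - t) *\<^sub>R y) \<le> ereal (t * a + (1 - t) * b)"
      using a b by simp
    then have "t *\<^sub>R x + (1 - t) *\<^sub>R y \<in> dom_fun \<phi>"
      unfolding dom_fun_def using le_less_trans[OF le, of \<infinity>] by simp
    moreover from this obtain r where "\<phi> (t *\<^sub>R x + (1 - t) *\<^sub>R y) = ereal r"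
      using proper_fun_domE[OF proper] by blast
    ultimately show ?thesis using le a b by simp
  qed
  have "u *\<^sub>R x + v *\<^sub>R y \<in> dom_fun \<phi> \<and> ?f (u *\<^sub>R x + v *\<^sub>R y) \<le> u * ?f x + v * ?f y"
    if "x \<in> dom_fun \<phi>" "y \<in> dom_fun \<phi>" "0 \<le> u" "0 \<le> v" "u + v = 1" for x y u v
  proof (cases "u = 0 \<or> v = 0")
    case True
    then show ?thesis using that by auto
  next
    case False
    then have "0 < u" "u < 1" "v = 1 - u" using that by auto
    then show ?thesis using step[OF that(1,2)] by simp
  qed
  then show ?thesis unfolding convex_on_def convex_def by blast
qed

lemma lsc_on_dom_fun:
  assumes proper: "proper_fun \<phi>" and lsc: "lsc_fun \<phi>"
  shows "lsc_on (dom_fun \<phi>) (\<lambda>z. real_of_ereal (\<phi> z))"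
  unfolding lsc_on_def
proof (intro ballI allI impI)
  fix x and e :: real assume x: "x \<in> dom_fun \<phi>" and e: "0 < e"
  obtain a where a: "\<phi> x = ereal a" using proper_fun_domE[OF proper x] .
  have "open (- {z. \<phi> z \<le> ereal (a - e)})" using lsc unfolding lsc_fun_def by blast
  moreover have "x \<in> - {z. \<phi> z \<le> ereal (a - e)}" using a e by simp
  ultimately obtain d where d: "0 < d" "ball x d \<subseteq> - {z. \<phi> z \<le> ereal (a - e)}"
    using open_contains_ball by blast
  have "a - e < real_of_ereal (\<phi> y)" if y: "y \<in> dom_fun \<phi>" "dist y x < d" for y
  proof -
    obtain b where "\<phi> y = ereal b" using proper_fun_domE[OF proper y(1)] .
    moreover have "\<not> \<phi> y \<le> ereal (a - e)" using d(2) y(2) by (auto simp: dist_commute)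
    ultimately show ?thesis by simp
  qed
  then show "\<exists>d>0. \<forall>y\<in>dom_fun \<phi>. dist y x < d \<longrightarrow> real_of_ereal (\<phi> x) - e < real_of_ereal (\<phi> y)"
    using d(1) a by auto
qed

lemma closed_lsc_fun_le:
  assumes lsc: "lsc_fun \<phi>" and g: "continuous_on UNIV g"
  shows "closed {z. \<phi> z \<le> ereal (g z)}"
  unfolding closed_def
proof (rule open_subopen[THEN iffD2], intro ballI)
  fix x assume "x \<in> - {z. \<phi> z \<le> ereal (g z)}"
  then have "ereal (g x) < \<phi> x" by (simp add: not_le)
  then obtain c where c: "ereal (g x) < ereal c" "ereal c < \<phi> x" using ereal_dense2 by blast
  let ?T = "- {z. \<phi> z \<le> ereal c} \<inter> {z. g z < c}"
  have "open ?T"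
    using lsc g unfolding lsc_fun_def by (intro open_Int open_Compl open_Collect_less continuous_intros) auto
  moreover have "x \<in> ?T" using c by (simp add: not_le)
  moreover have "?T \<subseteq> - {z. \<phi> z \<le> ereal (g z)}"
  proof
    fix z assume "z \<in> ?T"
    then have "ereal (g z) < ereal c" "ereal c < \<phi> z" by auto
    then have "ereal (g z) < \<phi> z" by (rule less_trans)
    then show "z \<in> - {z. \<phi> z \<le> ereal (g z)}" by (simp add: not_le)
  qed
  ultimately show "\<exists>T. open T \<and> x \<in> T \<and> T \<subseteq> - {z. \<phi> z \<le> ereal (g z)}" by blast
qed

lemma convex_on_affine_minus:
  assumes "linear L" "convex C"
  shows "convex_on C (\<lambda>z. c - L z)"
  unfolding convex_on_def
proof (intro conjI assms(2) ballI allI impI)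
  fix x y and u v :: real assume "u + v = 1"
  have "u * (c - L x) + v * (c - L y) = (u + v) * c - (u * L x + v * L y)"
    by (simp add: algebra_simps)
  also have "\<dots> = c - L (u *\<^sub>R x + v *\<^sub>R y)"
    using assms(1) \<open>u + v = 1\<close> by (simp add: linear_add linear_scale)
  finally show "c - L (u *\<^sub>R x + v *\<^sub>R y) \<le> u * (c - L x) + v * (c - L y)" by simp
qed

text \<open>Jensen's inequality shows that every convex combination of the functions
  \<open>z \<mapsto> f z - f w - P w z\<close>, \<open>w \<in> F\<close>, is nonpositive at the corresponding combination of
  the points \<open>w\<close>, because \<open>P\<close> vanishes on the diagonal; Ky Fan's inequality then gives a
  common point where all of them are nonpositive.\<close>

lemma finite_skew_equilibrium:
  fixes f :: "'a::real_normed_vector \<Rightarrow> real" and P :: "'a \<Rightarrow> 'a \<Rightarrow> real"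
  assumes f: "convex_on D f" "lsc_on D f"
    and P: "\<And>w. bounded_linear (P w)" "\<And>z. linear (\<lambda>w. P w z)" "\<And>z. P z z = 0"
    and F: "finite F" "F \<subseteq> D" "F \<noteq> {}"
  shows "\<exists>z\<in>D. \<forall>w\<in>F. f z \<le> f w + P w z"
proof -
  define C where "C = convex hull F"
  define h where "h w z = f z + (- f w - P w z)" for w z
  have "C \<subseteq> D" unfolding C_def using F(2) convex_on_imp_convex[OF f(1)] by (rule hull_minimal)
  have "compact C" unfolding C_def using F(1) by (rule finite_imp_compact_convex_hull)
  have convex_h: "convex_on C (h w)" for w
    unfolding h_def using convex_on_subset[OF f(1) \<open>C \<subseteq> D\<close>] bounded_linear.linear[OF P(1)]
    by (intro convex_on_add convex_on_affine_minus) (auto simp: C_def)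
  have lsc_h: "lsc_on C (h w)" for w
  proof -
    have "continuous_on C (\<lambda>z. - f w - P w z)" by (intro continuous_intros linear_continuous_on P(1))
    then show ?thesis
      unfolding h_def by (rule lsc_on_add[OF lsc_on_subset[OF f(2) \<open>C \<subseteq> D\<close>] continuous_on_imp_lsc_on])
  qed
  have weighted: "\<exists>\<mu>\<in>C. (\<Sum>w\<in>F. l w * h w \<mu>) \<le> 0" if l: "\<forall>w\<in>F. 0 \<le> l w" "sum l F = 1" for l
  proof
    define \<mu> where "\<mu> = (\<Sum>w\<in>F. l w *\<^sub>R w)"
    show "\<mu> \<in> C" unfolding \<mu>_def C_def using l F(1) by (intro convex_sum) (auto intro: hull_inc)
    have jensen: "f \<mu> \<le> (\<Sum>w\<in>F. l w * f w)"
      unfolding \<mu>_def using convex_on_sum[OF F(1,3) f(1), of l "\<lambda>w. w"] l F(2) by auto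
    have "P (\<Sum>w\<in>F. l w *\<^sub>R w) z = (\<Sum>w\<in>F. l w * P w z)" for z
      using linear_sum[OF P(2), of "\<lambda>w. l w *\<^sub>R w" F] linear_scale[OF P(2)] by simp
    from this[of \<mu>] have "(\<Sum>w\<in>F. l w * P w \<mu>) = P \<mu> \<mu>" unfolding \<mu>_def[symmetric] by simp
    moreover have "(\<Sum>w\<in>F. l w * h w \<mu>) =
        (\<Sum>w\<in>F. l w) * f \<mu> - (\<Sum>w\<in>F. l w * f w) - (\<Sum>w\<in>F. l w * P w \<mu>)"
      unfolding h_def by (simp add: algebra_simps sum_distrib_left sum_subtractf sum.distrib)
    ultimately have "(\<Sum>w\<in>F. l w * h w \<mu>) = f \<mu> - (\<Sum>w\<in>F. l w * f w)"
      using l P(3)[of \<mu>] by simp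
    then show "(\<Sum>w\<in>F. l w * h w \<mu>) \<le> 0" using jensen by simp
  qed
  obtain \<mu> where \<mu>: "\<mu> \<in> C" "\<forall>w\<in>F. h w \<mu> \<le> 0"
    using minimax_finite[OF F(1,3) \<open>compact C\<close> convex_h lsc_h weighted] by blast
  have "\<forall>w\<in>F. f \<mu> \<le> f w + P w \<mu>" using \<mu>(2) unfolding h_def by auto
  moreover have "\<mu> \<in> D" using \<mu>(1) \<open>C \<subseteq> D\<close> by blast
  ultimately show ?thesis by blast
qed

lemma convex_fun_sublevel_affine:
  assumes proper: "proper_fun \<phi>" and convex: "convex_fun \<phi>" and L: "linear L"
  shows "convex {z. \<phi> z \<le> ereal (c + L z)}"
proof -
  let ?f = "\<lambda>z. real_of_ereal (\<phi> z)"
  have "{z. \<phi> z \<le> ereal (c + L z)} = {z \<in> dom_fun \<phi>. ?f z + (0 - L z) \<le> c}"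
  proof (intro set_eqI iffI)
    fix z assume z: "z \<in> {z. \<phi> z \<le> ereal (c + L z)}"
    then have "z \<in> dom_fun \<phi>" unfolding dom_fun_def using le_less_trans[of "\<phi> z" _ \<infinity>] by auto
    moreover from this obtain r where "\<phi> z = ereal r" using proper_fun_domE[OF proper] by blast
    ultimately show "z \<in> {z \<in> dom_fun \<phi>. ?f z + (0 - L z) \<le> c}" using z by simp
  next
    fix z assume z: "z \<in> {z \<in> dom_fun \<phi>. ?f z + (0 - L z) \<le> c}"
    then obtain r where "\<phi> z = ereal r" using proper_fun_domE[OF proper] by blast
    then show "z \<in> {z. \<phi> z \<le> ereal (c + L z)}" using z by simp
  qed
  moreover have "convex_on (dom_fun \<phi>) (\<lambda>z. ?f z + (0 - L z))"
    using convex_on_dom_fun[OF proper convex] convex_on_imp_convex[OF convex_on_dom_fun[OF proper convex]]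
    by (intro convex_on_add convex_on_affine_minus L)
  ultimately show ?thesis by (simp add: convex_sublevel)
qed

lemma dom_fun_finite_skew_equilibrium:
  fixes \<phi> :: "'a::real_normed_vector \<Rightarrow> ereal" and P :: "'a \<Rightarrow> 'a \<Rightarrow> real"
  assumes proper: "proper_fun \<phi>" and convex: "convex_fun \<phi>" and lsc: "lsc_fun \<phi>"
    and dom0: "0 \<in> dom_fun \<phi>"
    and P: "\<And>w. bounded_linear (P w)" "\<And>z. linear (\<lambda>w. P w z)" "\<And>z. P z z = 0"
    and "finite F"
  shows "\<exists>z\<in>dom_fun \<phi>. \<phi> z \<le> \<phi> 0 \<and> (\<forall>w\<in>F. \<phi> z \<le> \<phi> w + ereal (P w z))"
proof -
  let ?f = "\<lambda>z. real_of_ereal (\<phi> z)"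
  have "finite (insert 0 (F \<inter> dom_fun \<phi>))" "insert 0 (F \<inter> dom_fun \<phi>) \<subseteq> dom_fun \<phi>"
    "insert 0 (F \<inter> dom_fun \<phi>) \<noteq> {}" using \<open>finite F\<close> dom0 by auto
  then obtain z where z: "z \<in> dom_fun \<phi>" and le: "\<forall>w\<in>insert 0 (F \<inter> dom_fun \<phi>). ?f z \<le> ?f w + P w z"
    using finite_skew_equilibrium[OF convex_on_dom_fun[OF proper convex] lsc_on_dom_fun[OF proper lsc] P]
    by blast
  obtain r where r: "\<phi> z = ereal r" using proper_fun_domE[OF proper z] .
  have le_ext: "\<phi> z \<le> \<phi> w + ereal (P w z)" if "w \<in> insert 0 F" for w
  proof (cases "w \<in> dom_fun \<phi>")
    case True
    then obtain a where a: "\<phi> w = ereal a" using proper_fun_domE[OF proper] by blast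
    have "?f z \<le> ?f w + P w z" using le True that by blast
    then show ?thesis using r a by simp
  next
    case False
    then show ?thesis unfolding dom_fun_def by simp
  qed
  have "\<phi> z \<le> \<phi> 0" using le_ext[of 0] linear_0[OF P(2)] by simp
  then show ?thesis using z le_ext by blast
qed

theorem skew_equilibrium:
  fixes \<phi> :: "'a::real_normed_vector \<Rightarrow> ereal" and P :: "'a \<Rightarrow> 'a \<Rightarrow> real"
  assumes refl: "reflexive_space TYPE('a)"
    and proper: "proper_fun \<phi>" and convex: "convex_fun \<phi>" and lsc: "lsc_fun \<phi>"
    and dom0: "0 \<in> dom_fun \<phi>" and bounded: "bounded {z. \<phi> z \<le> \<phi> 0}"
    and P: "\<And>w. bounded_linear (P w)" "\<And>z. linear (\<lambda>w. P w z)" "\<And>z. P z z = 0"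
  shows "\<exists>zb\<in>dom_fun \<phi>. \<forall>w. \<phi> zb \<le> \<phi> w + ereal (P w zb)"
proof -
  have "\<forall>F. \<exists>z. finite F \<longrightarrow> \<phi> z \<le> \<phi> 0 \<and> (\<forall>w\<in>F. \<phi> z \<le> \<phi> w + ereal (P w z))"
    using dom_fun_finite_skew_equilibrium[OF proper convex lsc dom0 P] by blast
  then obtain zF where zF: "\<And>F. finite F \<Longrightarrow> \<phi> (zF F) \<le> \<phi> 0 \<and> (\<forall>w\<in>F. \<phi> (zF F) \<le> \<phi> w + ereal (P w (zF F)))"
    by metis
  obtain R where R: "\<And>z. \<phi> z \<le> \<phi> 0 \<Longrightarrow> norm z \<le> R" using bounded unfolding bounded_iff by blast
  let ?F = "finite_subsets_at_top (UNIV :: 'a set)"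
  have "eventually (\<lambda>F. norm (zF F) \<le> R) ?F" using zF R by blast
  then obtain zb where zb: "\<And>K. closed K \<Longrightarrow> convex K \<Longrightarrow> eventually (\<lambda>F. zF F \<in> K) ?F \<Longrightarrow> zb \<in> K"
    using reflexive_bounded_net_weak_cluster[OF refl finite_subsets_at_top_neq_bot] by blast
  have below: "\<phi> zb \<le> ereal (a + P w zb)" if "\<phi> w = ereal a" for w a
  proof (rule zb[of "{z. \<phi> z \<le> ereal (a + P w z)}", simplified])
    show "closed {z. \<phi> z \<le> ereal (a + P w z)}"
      using P(1) by (intro closed_lsc_fun_le lsc continuous_intros linear_continuous_on)
    show "convex {z. \<phi> z \<le> ereal (a + P w z)}"
      using P(1) by (intro convex_fun_sublevel_affine proper convex bounded_linear.linear)
    have "\<phi> (zF F) \<le> ereal (a + P w (zF F))" if "finite F" "w \<in> F" for F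
    proof -
      have "\<phi> (zF F) \<le> \<phi> w + ereal (P w (zF F))" using zF[OF that(1)] that(2) by blast
      then show ?thesis using \<open>\<phi> w = ereal a\<close> by simp
    qed
    then show "eventually (\<lambda>F. \<phi> (zF F) \<le> ereal (a + P w (zF F))) ?F"
      unfolding eventually_finite_subsets_at_top by (intro exI[of _ "{w}"]) auto
  qed
  obtain a0 where "\<phi> 0 = ereal a0" using proper_fun_domE[OF proper dom0] .
  then have "zb \<in> dom_fun \<phi>"
    using below[of 0 a0] le_less_trans[of "\<phi> zb" _ \<infinity>] unfolding dom_fun_def by auto
  moreover have "\<phi> zb \<le> \<phi> w + ereal (P w zb)" for w
  proof (cases "w \<in> dom_fun \<phi>")
    case True
    then obtain a where "\<phi> w = ereal a" using proper_fun_domE[OF proper] by blast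
    then show ?thesis using below by simp
  next
    case False
    then show ?thesis unfolding dom_fun_def by simp
  qed
  ultimately show ?thesis by blast
qed

section \<open>The coupled functional\<close>

lemma coercive_sublevel_bounded:
  fixes \<phi> :: "'a::real_normed_vector \<times> 'b::real_normed_vector \<Rightarrow> ereal"
  assumes coercive: "\<forall>M::real. \<exists>R>0. \<forall>x y. norm x + norm y \<ge> R \<longrightarrow>
      \<phi> (x, y) / ereal (norm x + norm y) \<ge> ereal M"
  shows "bounded {z. \<phi> z \<le> ereal c}"
proof -
  obtain R where R: "\<And>x y. norm x + norm y \<ge> R \<Longrightarrow>
      \<phi> (x, y) / ereal (norm x + norm y) \<ge> ereal (\<bar>c\<bar> + 1)"
    using coercive by blast
  have "norm z \<le> max R 1" if "\<phi> z \<le> ereal c" for z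
  proof (rule ccontr)
    obtain x y where z: "z = (x, y)" by fastforce
    define s where "s = norm x + norm y"
    assume "\<not> norm z \<le> max R 1"
    then have s: "R \<le> s" "1 \<le> s" using norm_Pair_le[of x y] unfolding z s_def by linarith+
    then have "ereal (\<bar>c\<bar> + 1) \<le> \<phi> z / ereal s" using R unfolding z s_def by blast
    also have "\<dots> \<le> ereal c / ereal s"
      using that s by (intro ereal_divide_right_mono) auto
    also have "\<dots> = ereal (c / s)" using s by simp
    finally have "(\<bar>c\<bar> + 1) * 1 \<le> c / s * s" using s by (intro mult_mono) auto
    then show False using s by simp
  qed
  then show ?thesis unfolding bounded_iff by blast
qed

definition dual_pairing ::
  "('a::real_normed_vector \<Rightarrow>\<^sub>L real) \<times> ('b::real_normed_vector \<Rightarrow>\<^sub>L real) \<Rightarrow> 'a \<times> 'b \<Rightarrow> real" where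
  "dual_pairing pq z = fst pq (fst z) + snd pq (snd z)"

definition coupling_operator ::
  "('a::real_normed_vector \<Rightarrow>\<^sub>L ('b::real_normed_vector \<Rightarrow>\<^sub>L real)) \<Rightarrow> ('a \<Rightarrow>\<^sub>L ('a \<Rightarrow>\<^sub>L real)) \<Rightarrow>
    ('b \<Rightarrow>\<^sub>L ('b \<Rightarrow>\<^sub>L real)) \<Rightarrow> 'a \<times> 'b \<Rightarrow> ('a \<Rightarrow>\<^sub>L real) \<times> ('b \<Rightarrow>\<^sub>L real)" where
  "coupling_operator A B1 B2 z = (- adj_app A (snd z) + B1 (fst z), A (fst z) + B2 (snd z))"

lemma adj_app_apply [simp]: "blinfun_apply (adj_app A y) u = A u y"
  unfolding adj_app_def
  by (simp add: bounded_linear_Blinfun_apply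
      bounded_linear_compose[OF blinfun.bounded_linear_left blinfun.bounded_linear_right])

lemma bounded_linear_dual_pairing: "bounded_linear (dual_pairing pq)"
  unfolding dual_pairing_def
  by (intro bounded_linear_add bounded_linear_blinfun_apply bounded_linear_fst bounded_linear_snd)

lemma dual_pairing_coupling_operator:
  "dual_pairing (coupling_operator A B1 B2 (x, y)) (u, v) = - A u y + B1 x u + A x v + B2 y v"
  unfolding dual_pairing_def coupling_operator_def
  by (simp add: blinfun.add_left blinfun.minus_left blinfun.diff_left)

lemma dual_pairing_coupling_operator_antisym:
  assumes "skew_adjoint B1" "skew_adjoint B2"
  shows "dual_pairing (coupling_operator A B1 B2 w) z = - dual_pairing (coupling_operator A B1 B2 z) w"
proof -
  obtain x y u v where "w = (x, y)" "z = (u, v)" by fastforce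
  moreover have "B1 x u = - B1 u x" "B2 y v = - B2 v y"
    using assms unfolding skew_adjoint_def by blast+
  ultimately show ?thesis by (simp add: dual_pairing_coupling_operator)
qed

lemma dual_pairing_coupling_operator_self:
  assumes "skew_adjoint B1" "skew_adjoint B2"
  shows "dual_pairing (coupling_operator A B1 B2 z) z = 0"
  using dual_pairing_coupling_operator_antisym[OF assms, of A z z] by simp

lemma linear_dual_pairing_coupling_operator:
  assumes "skew_adjoint B1" "skew_adjoint B2"
  shows "linear (\<lambda>w. dual_pairing (coupling_operator A B1 B2 w) z)"
proof -
  have "(\<lambda>w. dual_pairing (coupling_operator A B1 B2 w) z) = (\<lambda>w. - dual_pairing (coupling_operator A B1 B2 z) w)"
    by (rule ext) (rule dual_pairing_coupling_operator_antisym[OF assms])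
  then show ?thesis by (simp add: bounded_linear.linear bounded_linear_minus bounded_linear_dual_pairing)
qed

lemma legendre_eq_SUP_dual_pairing: "legendre \<phi> pq = (SUP z. ereal (dual_pairing pq z) - \<phi> z)"
  unfolding legendre_def dual_pairing_def ..

lemma fenchel_young:
  assumes "proper_fun \<phi>"
  shows "ereal (dual_pairing pq z) \<le> \<phi> z + legendre \<phi> pq"
proof -
  have le: "ereal (dual_pairing pq w) - \<phi> w \<le> legendre \<phi> pq" for w
    unfolding legendre_eq_SUP_dual_pairing by (rule SUP_upper) simp
  obtain z0 where "\<phi> z0 \<noteq> \<infinity>" "\<phi> z0 \<noteq> -\<infinity>" using assms unfolding proper_fun_def by blast
  then have "legendre \<phi> pq \<noteq> -\<infinity>" using le[of z0] by (cases "\<phi> z0") auto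
  moreover have "\<phi> z \<noteq> -\<infinity>" using assms unfolding proper_fun_def by blast
  ultimately show ?thesis using le[of z] by (cases "\<phi> z"; cases "legendre \<phi> pq") auto
qed

lemma subdiff_imp_fenchel_young_eq:
  assumes "proper_fun \<phi>" "pq \<in> subdiff \<phi> z"
  shows "\<phi> z + legendre \<phi> pq = ereal (dual_pairing pq z)"
proof -
  have "\<phi> z \<noteq> \<infinity>" using assms(2) unfolding subdiff_def by blast
  moreover have "\<phi> z \<noteq> -\<infinity>" using assms(1) unfolding proper_fun_def by blast
  ultimately obtain r where r: "\<phi> z = ereal r" by (cases "\<phi> z") auto
  have "ereal (dual_pairing pq w) - \<phi> w \<le> ereal (dual_pairing pq z - r)" for w
  proof -
    have "\<phi> z + ereal (fst pq (fst w - fst z) + snd pq (snd w - snd z)) \<le> \<phi> w"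
      using assms(2) unfolding subdiff_def by blast
    then have "\<phi> z + ereal (dual_pairing pq (w - z)) \<le> \<phi> w" by (simp add: dual_pairing_def)
    moreover have "dual_pairing pq (w - z) = dual_pairing pq w - dual_pairing pq z"
      using linear_diff[OF bounded_linear.linear[OF bounded_linear_dual_pairing]] .
    ultimately show ?thesis using r by (cases "\<phi> w") auto
  qed
  then have "legendre \<phi> pq \<le> ereal (dual_pairing pq z - r)"
    unfolding legendre_eq_SUP_dual_pairing by (rule SUP_least)
  then have "\<phi> z + legendre \<phi> pq \<le> ereal (dual_pairing pq z)" using r
    by (cases "legendre \<phi> pq") auto
  then show ?thesis using fenchel_young[OF assms(1), of pq z] by simp
qed

lemma coupling_equilibrium_imp_subdiff:
  assumes proper: "proper_fun \<phi>" and skew: "skew_adjoint B1" "skew_adjoint B2"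
    and zb: "zb \<in> dom_fun \<phi>" "\<And>w. \<phi> zb \<le> \<phi> w + ereal (dual_pairing (coupling_operator A B1 B2 w) zb)"
  shows "coupling_operator A B1 B2 zb \<in> subdiff \<phi> zb"
  unfolding subdiff_def
proof (intro CollectI conjI allI)
  let ?\<Gamma> = "coupling_operator A B1 B2"
  obtain r where r: "\<phi> zb = ereal r" using proper_fun_domE[OF proper zb(1)] .
  then show "\<phi> zb \<noteq> \<infinity>" by simp
  fix w
  have "fst (?\<Gamma> zb) (fst w - fst zb) + snd (?\<Gamma> zb) (snd w - snd zb) = dual_pairing (?\<Gamma> zb) (w - zb)"
    by (simp add: dual_pairing_def)
  also have "\<dots> = dual_pairing (?\<Gamma> zb) w - dual_pairing (?\<Gamma> zb) zb"
    by (rule linear_diff[OF bounded_linear.linear[OF bounded_linear_dual_pairing]])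
  also have "\<dots> = - dual_pairing (?\<Gamma> w) zb"
    using dual_pairing_coupling_operator_antisym[OF skew, of A zb w]
      dual_pairing_coupling_operator_self[OF skew, of A zb] by simp
  finally have eq: "fst (?\<Gamma> zb) (fst w - fst zb) + snd (?\<Gamma> zb) (snd w - snd zb) = - dual_pairing (?\<Gamma> w) zb" .
  have "\<phi> w \<noteq> -\<infinity>" using proper unfolding proper_fun_def by blast
  then show "\<phi> zb + ereal (fst (?\<Gamma> zb) (fst w - fst zb) + snd (?\<Gamma> zb) (snd w - snd zb)) \<le> \<phi> w"
    using zb(2)[of w] r unfolding eq by (cases "\<phi> w") auto
qed

theorem proposition4p2:
  fixes \<phi> :: "'a::banach \<times> 'b::banach \<Rightarrow> ereal"
    and A :: "'a \<Rightarrow>\<^sub>L ('b \<Rightarrow>\<^sub>L real)"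
    and B1 :: "'a \<Rightarrow>\<^sub>L ('a \<Rightarrow>\<^sub>L real)"
    and B2 :: "'b \<Rightarrow>\<^sub>L ('b \<Rightarrow>\<^sub>L real)"
    and I :: "'a \<times> 'b \<Rightarrow> ereal"
  assumes reflX: "reflexive_space TYPE('a)"
    and reflY: "reflexive_space TYPE('b)"
    and proper: "proper_fun \<phi>"
    and convex: "convex_fun \<phi>"
    and lsc: "lsc_fun \<phi>"
    and dom0: "(0, 0) \<in> dom_fun \<phi>"
    and coercive: "\<forall>M::real. \<exists>R>0. \<forall>x y. norm x + norm y \<ge> R \<longrightarrow>
                      \<phi> (x, y) / ereal (norm x + norm y) \<ge> ereal M"
    and skew1: "skew_adjoint B1"
    and skew2: "skew_adjoint B2"
    and I_def: "\<forall>x y. I (x, y) = \<phi> (x, y) +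
                   legendre \<phi> (- adj_app A y + blinfun_apply B1 x, blinfun_apply A x + blinfun_apply B2 y)"
  shows "(INF z. I z) = 0 \<and>
         (\<exists>xb yb. I (xb, yb) = 0 \<and>
            (- adj_app A yb + blinfun_apply B1 xb, blinfun_apply A xb + blinfun_apply B2 yb) \<in> subdiff \<phi> (xb, yb))"
proof -
  let ?\<Gamma> = "coupling_operator A B1 B2"
  have I_eq: "I z = \<phi> z + legendre \<phi> (?\<Gamma> z)" for z
    using I_def by (cases z) (simp add: coupling_operator_def)
  have diag: "dual_pairing (?\<Gamma> z) z = 0" for z
    by (rule dual_pairing_coupling_operator_self[OF skew1 skew2])
  have dom0': "0 \<in> dom_fun \<phi>" using dom0 by (simp add: zero_prod_def)
  obtain c0 where "\<phi> 0 = ereal c0" using proper_fun_domE[OF proper dom0'] .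
  then have bounded: "bounded {z. \<phi> z \<le> \<phi> 0}" using coercive_sublevel_bounded[OF coercive] by simp
  obtain zb where zb: "zb \<in> dom_fun \<phi>" "\<forall>w. \<phi> zb \<le> \<phi> w + ereal (dual_pairing (?\<Gamma> w) zb)"
    using skew_equilibrium[OF reflexive_space_prod[OF reflX reflY] proper convex lsc dom0' bounded
        bounded_linear_dual_pairing linear_dual_pairing_coupling_operator[OF skew1 skew2] diag] by blast
  have subgradient: "?\<Gamma> zb \<in> subdiff \<phi> zb"
    using coupling_equilibrium_imp_subdiff[OF proper skew1 skew2 zb(1) zb(2)[rule_format]] .
  have "I zb = 0"
    using subdiff_imp_fenchel_young_eq[OF proper subgradient] diag I_eq by (simp add: zero_ereal_def)
  have "0 \<le> I z" for z
    using fenchel_young[OF proper, of "?\<Gamma> z" z] diag I_eq by (simp add: zero_ereal_def)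
  then have "0 \<le> (INF z. I z)" by (rule INF_greatest)
  moreover have "(INF z. I z) \<le> 0" using INF_lower[of zb UNIV I] \<open>I zb = 0\<close> by simp
  moreover have "I (fst zb, snd zb) = 0 \<and> (- adj_app A (snd zb) + B1 (fst zb), A (fst zb) + B2 (snd zb))
      \<in> subdiff \<phi> (fst zb, snd zb)"
    using \<open>I zb = 0\<close> subgradient by (simp add: coupling_operator_def)
  ultimately show ?thesis by (intro conjI antisym) blast+
qed

end
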